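(* Let $\Pi=(V_p,V_r,L,\ell_{\mathrm{init}},\ell_{\mathrm{out}},\mu_{\mathrm{init}},\mathcal D,\mathfrak T)$ be a score-at-end WPTS. Let $h:L\times\mathbb{R}^{|V_p|}\to\mathbb{R}$ be a bounded function (i.e. $\sup|h|<\infty$). If $h$ is a potential upper weight function (PUWF), then for every $\mathbf v_{\mathrm{init}}\in\operatorname{supp}\mu_{\mathrm{init}}$ we have $[\![\Pi]\!]_{\mathbf v_{\mathrm{init}}}(\mathbb{R}^{|V_p|})\le h(\ell_{\mathrm{init}},\mathbf v_{\mathrm{init}})$. If $h$ is a potential lower weight function (PLWF), then for every $\mathbf v_{\mathrm{init}}\in\operatorname{supp}\mu_{\mathrm{init}}$ we have $[\![\Pi]\!]_{\mathbf v_{\mathrm{init}}}(\mathbb{R}^{|V_p|})\ge h(\ell_{\mathrm{init}},\mathbf v_{\mathrm{init}})$.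
   Context: A weighted probabilistic transition system (WPTS) is a tuple $\Pi=(V_p,V_r,L,\ell_{\mathrm{init}},\ell_{\mathrm{out}},\mu_{\mathrm{init}},\mathcal D,\mathfrak T)$ where: $V_p$ (program variables) and $V_r$ (sampling variables) are finite disjoint sets; a program valuation is $\mathbf v\in\mathbb{R}^{|V_p|}$ and a sampling valuation is $\mathbf r\in\mathbb{R}^{|V_r|}$; $L$ is a finite set of locations with $\ell_{\mathrm{init}},\ell_{\mathrm{out}}\in L$; $\mu_{\mathrm{init}}$ is a probability distribution on $\mathbb{R}^{|V_p|}$ with bounded support; $\mathcal D$ is a product probability distribution on $\mathbb{R}^{|V_r|}$ (each sampling variable independently distributed); $\mathfrak T$ is a finite set of transitions $\tau=\langle \ell,\phi,F_1,\dots,F_k\rangle$ with source location $\ell\neq\ell_{\mathrm{out}}$, guard $\phi$ (a measurable predicate on program valuations) and forks $F_j=\langle \ell'_j,p_j,\mathrm{upd}_j,\mathrm{wt}_j\rangle$, where $\ell'_j\in L$, $p_j\in(0,1]$ with $\sum_j p_j=1$, $\mathrm{upd}_j:\mathbb{R}^{|V_p|}\times\mathbb{R}^{|V_r|}\to\mathbb{R}^{|V_p|}$ measurable (update function) and $\mathrm{wt}_j:\mathbb{R}^{|V_p|}\times\mathbb{R}^{|V_r|}\to[0,\infty)$ measurable (score function). The WPTS is deterministic and total: for every location $\ell\ne\ell_{\mathrm{out}}$ and valuation $\mathbf v$ there is exactly one transition with source $\ell$ whose guard $\mathbf v$ satisfies. Semantics: from a state $(\ell,\mathbf v)$ the run starts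 with weighted state $(\ell,\mathbf v,1)$. From a weighted state $(\ell_n,\mathbf v_n,w_n)$: if $\ell_n=\ell_{\mathrm{out}}$ the next weighted state is the same; otherwise take the unique enabled transition $\langle\ell_n,\phi,F_1,\dots,F_k\rangle$, choose fork $j$ with probability $p_j$, sample $\mathbf r\sim\mathcal D$ independently, and move to $(\ell'_j,\mathrm{upd}_j(\mathbf v_n,\mathbf r),w_n\cdot\mathrm{wt}_j(\mathbf v_n,\mathbf r))$. $\mathbb P_{(\ell,\mathbf v)},\mathbb E_{(\ell,\mathbf v)}$ denote the induced probability and expectation on runs; for an initial valuation $\mathbf v$ we write $\mathbb P_{\mathbf v},\mathbb E_{\mathbf v}$ for the case $\ell=\ell_{\mathrm{init}}$. The termination time is $T=\min\{n:\ell_n=\ell_{\mathrm{out}}\}$ ($\min\emptyset=\infty$); $\hat{\mathbf v}_T,\hat w_T$ are the valuation and weight at termination. A state $(\ell,\mathbf v)$ is reachable if it occurs in some run starting from $(\ell_{\mathrm{init}},\mathbf v_0)$ with $\mathbf v_0\in\operatorname{supp}\mu_{\mathrm{init}}$. $\Pi$ is almost-surely terminating (AST) if $\mathbb P_{\mathbf v}(T<\infty)=1$ for all $\mathbf v\in\operatorname{supp}\mu_{\mathrm{init}}$. For measurable $U\subseteq\mathbb{R}^{|V_p|}$, the expected weight is $[\![\Pi]\!]_{\mathbf v}(U):=\mathbb E_{\mathbf v}[\mathbf 1_{T<\infty}\,[\hat{\mathbf v}_T\in U]\,\hat w_T]$. $\Pi$ is score-at-end if: (i) it is AST; (ii) exactly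 one transition has a fork with destination $\ell_{\mathrm{out}}$, and that transition has the form $\langle\ell,\phi,F\rangle$ with a single fork $F=\langle\ell_{\mathrm{out}},1,\mathrm{id},\mathrm{wt}\rangle$ where $\mathrm{id}(\mathbf v,\mathbf r)=\mathbf v$ and $0\le\mathrm{wt}\le M$ for some constant $M>0$; (iii) every other fork has score function constantly $1$. The expected-weight transformer maps $h:L\times\mathbb{R}^{|V_p|}\to\mathbb{R}$ to $\mathrm{ewt}(h)$ with $\mathrm{ewt}(h)(\ell_{\mathrm{out}},\mathbf v)=1$ and, for $\ell\ne\ell_{\mathrm{out}}$ with unique enabled transition $\langle\ell,\phi,F_1,\dots,F_k\rangle$, $F_j=\langle\ell'_j,p_j,\mathrm{upd}_j,\mathrm{wt}_j\rangle$: $\mathrm{ewt}(h)(\ell,\mathbf v)=\sum_{j=1}^k p_j\,\mathbb E_{\mathbf r\sim\mathcal D}[\mathrm{wt}_j(\mathbf v,\mathbf r)\,h(\ell'_j,\mathrm{upd}_j(\mathbf v,\mathbf r))]$. A PUWF is a function $h:L\times\mathbb{R}^{|V_p|}\to\mathbb{R}$ such that (C1) $\mathrm{ewt}(h)(\ell,\mathbf v)\le h(\ell,\mathbf v)$ for all reachable states $(\ell,\mathbf v)$ with $\ell\ne\ell_{\mathrm{out}}$, and (C2) $h(\ell_{\mathrm{out}},\mathbf v)=1$ for all reachable states $(\ell_{\mathrm{out}},\mathbf v)$. A PLWF satisfies (C2) and (C1') $\mathrm{ewt}(h)(\ell,\mathbf v)\ge h(\ell,\mathbf v)$ for all reachable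 states with $\ell\ne\ell_{\mathrm{out}}$. *)

theory Defs
  imports "HOL-Probability.Probability"
begin

text \<open>Locations form a finite type 'l; program valuations are vectors in real^'p
  (index type 'p = V_p), sampling valuations are vectors in real^'r (index type 'r = V_r).\<close>

record ('l, 'p::finite, 'r::finite) fork =
  f_dest :: 'l
  f_prob :: real
  f_upd  :: "real^'p \<Rightarrow> real^'r \<Rightarrow> real^'p"
  f_wt   :: "real^'p \<Rightarrow> real^'r \<Rightarrow> real"

record ('l, 'p::finite, 'r::finite) transition =
  t_src   :: 'l
  t_guard :: "real^'p \<Rightarrow> bool"
  t_forks :: "('l, 'p, 'r) fork list"

record ('l, 'p::finite, 'r::finite) wpts =
  w_init :: 'l
  w_out  :: 'l
  w_mu   :: "(real^'p) measure"
  w_D    :: "(real^'r) measure"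
  w_T    :: "('l, 'p, 'r) transition set"

definition supp_meas :: "'a::topological_space measure \<Rightarrow> 'a set" where
  "supp_meas M = {x. \<forall>U. open U \<and> x \<in> U \<longrightarrow> emeasure M U > 0}"

definition is_wpts :: "('l::finite, 'p::finite, 'r::finite) wpts \<Rightarrow> bool" where
  "is_wpts P \<longleftrightarrow>
     finite (w_T P) \<and>
     prob_space (w_mu P) \<and> sets (w_mu P) = sets borel \<and> bounded (supp_meas (w_mu P)) \<and>
     prob_space (w_D P) \<and> sets (w_D P) = sets borel \<and>
     prob_space.indep_vars (w_D P) (\<lambda>_. borel) (\<lambda>i x. x $ i) UNIV \<and>
     (\<forall>\<tau>\<in>w_T P. t_src \<tau> \<noteq> w_out P \<and> t_forks \<tau> \<noteq> [] \<and>
        {v. t_guard \<tau> v} \<in> sets borel \<and>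
        (\<Sum>f\<leftarrow>t_forks \<tau>. f_prob f) = 1 \<and>
        (\<forall>f\<in>set (t_forks \<tau>). 0 < f_prob f \<and> f_prob f \<le> 1 \<and>
           case_prod (f_upd f) \<in> measurable (borel \<Otimes>\<^sub>M borel) borel \<and>
           case_prod (f_wt f) \<in> borel_measurable (borel \<Otimes>\<^sub>M borel) \<and>
           (\<forall>v r. 0 \<le> f_wt f v r))) \<and>
     (\<forall>l v. l \<noteq> w_out P \<longrightarrow> (\<exists>!\<tau>. \<tau> \<in> w_T P \<and> t_src \<tau> = l \<and> t_guard \<tau> v))"

definition enabled :: "('l::finite, 'p::finite, 'r::finite) wpts \<Rightarrow> 'l \<Rightarrow> real^'p \<Rightarrow> ('l, 'p, 'r) transition" where
  "enabled P l v = (THE \<tau>. \<tau> \<in> w_T P \<and> t_src \<tau> = l \<and> t_guard \<tau> v)"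

text \<open>Choosing fork j with probability p_j from a uniform seed u in [0,1).\<close>
fun pick_fork :: "('l, 'p::finite, 'r::finite) fork list \<Rightarrow> real \<Rightarrow> ('l, 'p, 'r) fork" where
  "pick_fork [] u = undefined"
| "pick_fork [f] u = f"
| "pick_fork (f # g # fs) u = (if u < f_prob f then f else pick_fork (g # fs) (u - f_prob f))"

text \<open>Randomness of a run: an i.i.d. sequence of (fork seed u ~ Uniform[0,1), r ~ D).\<close>
definition seed_space :: "('l::finite, 'p::finite, 'r::finite) wpts \<Rightarrow> (nat \<Rightarrow> real \<times> (real^'r)) measure" where
  "seed_space P = PiM UNIV (\<lambda>_::nat. uniform_measure lborel {0..<1::real} \<Otimes>\<^sub>M w_D P)"

definition step :: "('l::finite, 'p::finite, 'r::finite) wpts \<Rightarrow> 'l \<times> (real^'p) \<times> real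
    \<Rightarrow> real \<times> (real^'r) \<Rightarrow> 'l \<times> (real^'p) \<times> real" where
  "step P s x = (case s of (l, v, w) \<Rightarrow> case x of (u, r) \<Rightarrow>
     if l = w_out P then (l, v, w)
     else (let f = pick_fork (t_forks (enabled P l v)) u
           in (f_dest f, f_upd f v r, w * f_wt f v r)))"

primrec run :: "('l::finite, 'p::finite, 'r::finite) wpts \<Rightarrow> 'l \<times> (real^'p) \<times> real
    \<Rightarrow> (nat \<Rightarrow> real \<times> (real^'r)) \<Rightarrow> nat \<Rightarrow> 'l \<times> (real^'p) \<times> real" where
  "run P s \<omega> 0 = s"
| "run P s \<omega> (Suc n) = step P (run P s \<omega> n) (\<omega> n)"

definition terminates :: "('l::finite, 'p::finite, 'r::finite) wpts \<Rightarrow> 'l \<times> (real^'p) \<times> real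
    \<Rightarrow> (nat \<Rightarrow> real \<times> (real^'r)) \<Rightarrow> bool" where
  "terminates P s \<omega> \<longleftrightarrow> (\<exists>n. fst (run P s \<omega> n) = w_out P)"

definition term_time :: "('l::finite, 'p::finite, 'r::finite) wpts \<Rightarrow> 'l \<times> (real^'p) \<times> real
    \<Rightarrow> (nat \<Rightarrow> real \<times> (real^'r)) \<Rightarrow> nat" where
  "term_time P s \<omega> = (LEAST n. fst (run P s \<omega> n) = w_out P)"

text \<open>Expected weight [[P]]_v(U) = E_v[1_{T<\<infinity>} [v_T \<in> U] w_T], starting in (l_init, v) with weight 1.\<close>
definition expected_weight :: "('l::finite, 'p::finite, 'r::finite) wpts \<Rightarrow> real^'p \<Rightarrow> (real^'p) set \<Rightarrow> ennreal" where
  "expected_weight P v U =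
     (\<integral>\<^sup>+ \<omega>. (let s = (w_init P, v, 1::real) in
               if terminates P s \<omega> \<and> fst (snd (run P s \<omega> (term_time P s \<omega>))) \<in> U
               then ennreal (snd (snd (run P s \<omega> (term_time P s \<omega>)))) else 0) \<partial>seed_space P)"

definition AST :: "('l::finite, 'p::finite, 'r::finite) wpts \<Rightarrow> bool" where
  "AST P \<longleftrightarrow> (\<forall>v\<in>supp_meas (w_mu P).
      emeasure (seed_space P) {\<omega> \<in> space (seed_space P). terminates P (w_init P, v, 1) \<omega>} = 1)"

text \<open>Reachable states: those occurring in some run from (l_init, v0), v0 in supp mu_init
  (forks have positive probability; samples range over the support of D).\<close>
inductive_set reachable :: "('l::finite, 'p::finite, 'r::finite) wpts \<Rightarrow> ('l \<times> (real^'p)) set"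
  for P :: "('l, 'p, 'r) wpts" where
  init: "v \<in> supp_meas (w_mu P) \<Longrightarrow> (w_init P, v) \<in> reachable P"
| step: "(l, v) \<in> reachable P \<Longrightarrow> l \<noteq> w_out P \<Longrightarrow> f \<in> set (t_forks (enabled P l v)) \<Longrightarrow>
         r \<in> supp_meas (w_D P) \<Longrightarrow> (f_dest f, f_upd f v r) \<in> reachable P"

definition score_at_end :: "('l::finite, 'p::finite, 'r::finite) wpts \<Rightarrow> bool" where
  "score_at_end P \<longleftrightarrow> is_wpts P \<and> AST P \<and>
     (\<exists>!\<tau>. \<tau> \<in> w_T P \<and> (\<exists>f\<in>set (t_forks \<tau>). f_dest f = w_out P)) \<and>
     (\<forall>\<tau>\<in>w_T P. (\<exists>f\<in>set (t_forks \<tau>). f_dest f = w_out P) \<longrightarrow>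
        (\<exists>f. t_forks \<tau> = [f] \<and> f_dest f = w_out P \<and> f_prob f = 1 \<and> f_upd f = (\<lambda>v r. v) \<and>
             (\<exists>M>0. \<forall>v r. 0 \<le> f_wt f v r \<and> f_wt f v r \<le> M))) \<and>
     (\<forall>\<tau>\<in>w_T P. \<forall>f\<in>set (t_forks \<tau>). f_dest f \<noteq> w_out P \<longrightarrow> f_wt f = (\<lambda>v r. 1))"

definition ewt :: "('l::finite, 'p::finite, 'r::finite) wpts \<Rightarrow> ('l \<Rightarrow> real^'p \<Rightarrow> real) \<Rightarrow> 'l \<Rightarrow> real^'p \<Rightarrow> real" where
  "ewt P h l v = (if l = w_out P then 1 else
     (\<Sum>f\<leftarrow>t_forks (enabled P l v).
        f_prob f * (\<integral>r. f_wt f v r * h (f_dest f) (f_upd f v r) \<partial>w_D P)))"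

definition PUWF :: "('l::finite, 'p::finite, 'r::finite) wpts \<Rightarrow> ('l \<Rightarrow> real^'p \<Rightarrow> real) \<Rightarrow> bool" where
  "PUWF P h \<longleftrightarrow>
     (\<forall>(l, v)\<in>reachable P. l \<noteq> w_out P \<longrightarrow> ewt P h l v \<le> h l v) \<and>
     (\<forall>(l, v)\<in>reachable P. l = w_out P \<longrightarrow> h l v = 1)"

definition PLWF :: "('l::finite, 'p::finite, 'r::finite) wpts \<Rightarrow> ('l \<Rightarrow> real^'p \<Rightarrow> real) \<Rightarrow> bool" where
  "PLWF P h \<longleftrightarrow>
     (\<forall>(l, v)\<in>reachable P. l \<noteq> w_out P \<longrightarrow> ewt P h l v \<ge> h l v) \<and>
     (\<forall>(l, v)\<in>reachable P. l = w_out P \<longrightarrow> h l v = 1)"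

end

theory Submission
  imports Defs
begin

text \<open>Let \<open>Y(l, v, w) = w \<cdot> h(l, v)\<close>, except \<open>Y = w\<close> at the exit location, and let \<open>V\<^sub>n(s)\<close> be the
  expectation of \<open>Y\<close> after \<open>n\<close> steps from \<open>s\<close>. Unfolding one step writes \<open>V\<^sub>n\<^sub>+\<^sub>1\<close> as an integral of
  \<open>V\<^sub>n\<close> over the successor states, while at a reachable state the PUWF (PLWF) condition compares
  the same integral of \<open>Y\<close> with \<open>h\<close>; by induction on \<open>n\<close>, \<open>V\<^sub>n\<close> at the initial state \<open>(l\<^sub>i\<^sub>n\<^sub>i\<^sub>t, v, 1)\<close>
  is at most (at least) \<open>h(l\<^sub>i\<^sub>n\<^sub>i\<^sub>t, v)\<close>. Weights are \<open>1\<close> before termination and bounded afterwards, so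
  \<open>Y\<close> is bounded along runs; by almost-sure termination it converges along almost every run to
  the final weight, and dominated convergence identifies \<open>lim V\<^sub>n\<close> with the expected weight.\<close>

lemma pick_fork_in_set: "fs \<noteq> [] \<Longrightarrow> pick_fork fs u \<in> set fs"
  by (induction fs u rule: pick_fork.induct) auto

lemma measurable_pick_fork:
  assumes "fs \<noteq> []" "set fs \<subseteq> B"
  shows "pick_fork fs \<in> borel \<rightarrow>\<^sub>M count_space B"
  using assms
proof (induction fs)
  case (Cons f fs)
  show ?case
  proof (cases fs)
    case (Cons g gs)
    then have "pick_fork (f # fs) = (\<lambda>u. if u < f_prob f then f else pick_fork fs (u - f_prob f))"
      by (auto simp: fun_eq_iff)
    moreover have "(\<lambda>u::real. pick_fork fs (u - f_prob f)) \<in> borel \<rightarrow>\<^sub>M count_space B"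
      using Cons Cons.prems by (intro measurable_compose[OF _ Cons.IH]) auto
    ultimately show ?thesis
      using Cons.prems by (auto intro: measurable_If)
  qed (use Cons.prems in simp)
qed simp

lemma closed_supp_meas: "closed (supp_meas M)"
proof -
  have "open (- supp_meas M)"
    unfolding open_subopen[of "- supp_meas M"]
  proof
    fix x assume "x \<in> - supp_meas M"
    then obtain U where "open U" "x \<in> U" "\<not> emeasure M U > 0"
      by (auto simp: supp_meas_def)
    moreover from this have "U \<subseteq> - supp_meas M"
      by (auto simp: supp_meas_def)
    ultimately show "\<exists>T. open T \<and> x \<in> T \<and> T \<subseteq> - supp_meas M" by blast
  qed
  then show ?thesis by (simp add: closed_def)
qed

lemma AE_in_supp_meas:
  fixes M :: "'a::second_countable_topology measure"
  assumes "sets M = sets borel"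
  shows "AE x in M. x \<in> supp_meas M"
proof -
  let ?N = "{U. open U \<and> emeasure M U = 0}"
  obtain N' where N': "N' \<subseteq> ?N" "countable N'" "\<Union>N' = \<Union>?N"
    using Lindelof[of ?N] by blast
  have "(\<Union>U\<in>N'. U) \<in> null_sets M"
    using N' assms by (intro null_sets_UN') (auto simp: null_sets_def)
  moreover have "- supp_meas M \<subseteq> \<Union>N'"
    using N'(3) by (auto simp: supp_meas_def)
  ultimately show ?thesis
    by (intro AE_I[of _ _ "\<Union>N'"]) (auto simp: null_sets_def)
qed

abbreviation unit_uniform :: "real measure" where
  "unit_uniform \<equiv> uniform_measure lborel {0..<1}"

lemma prob_space_unit_uniform: "prob_space unit_uniform"
  by (rule prob_space_uniform_measure) auto

lemma has_bochner_integral_unit_uniform_indicator: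
  assumes "{0..<1} \<inter> A = {a..<b}" "A \<in> sets borel" "a \<le> b"
  shows "has_bochner_integral unit_uniform (indicator A) (b - a)"
proof -
  interpret prob_space unit_uniform by (rule prob_space_unit_uniform)
  have "emeasure unit_uniform A < \<infinity>"
    by (rule order_le_less_trans[OF emeasure_le_1]) simp
  then have "has_bochner_integral unit_uniform (indicator A) (measure unit_uniform A)"
    using assms(2) by (intro has_bochner_integral_real_indicator) auto
  then show ?thesis
    using assms by (simp add: measure_uniform_measure)
qed

text \<open>A fork list is sampled from a seed \<open>u\<close> by cutting \<open>[0, 1)\<close> into consecutive intervals of
  lengths \<open>p\<^sub>j\<close>; the offset \<open>a\<close> is the total length of the intervals already cut off.\<close>

lemma has_bochner_integral_pick_fork_shifted:
  fixes \<phi> :: "('l, 'p::finite, 'r::finite) fork \<Rightarrow> real"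
  assumes "fs \<noteq> []" "\<forall>f\<in>set fs. 0 < f_prob f" "0 \<le> a" "a + (\<Sum>f\<leftarrow>fs. f_prob f) = 1"
  shows "has_bochner_integral unit_uniform (\<lambda>u. indicator {a..} u * \<phi> (pick_fork fs (u - a)))
           (\<Sum>f\<leftarrow>fs. f_prob f * \<phi> f)"
  using assms
proof (induction fs arbitrary: a)
  case (Cons f fs)
  show ?case
  proof (cases fs)
    case Nil
    have "has_bochner_integral unit_uniform (\<lambda>u. indicator {a..} u * \<phi> f) ((1 - a) * \<phi> f)"
      using Cons.prems Nil by (intro has_bochner_integral_mult_left has_bochner_integral_unit_uniform_indicator) auto
    moreover have "1 - a = f_prob f"
      using Cons.prems Nil by simp
    ultimately show ?thesis using Nil by simp
  next
    case (Cons g gs)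
    have pf: "0 < f_prob f"
      using Cons.prems(2) by simp
    have "0 \<le> (\<Sum>f\<leftarrow>fs. f_prob f)"
      using Cons.prems(2) by (intro sum_list_nonneg) auto
    then have rest: "a + f_prob f \<le> 1"
      using Cons.prems(4) by simp
    have head: "has_bochner_integral unit_uniform (\<lambda>u. indicator {a..<a + f_prob f} u * \<phi> f)
        ((a + f_prob f - a) * \<phi> f)"
      using Cons.prems rest by (intro has_bochner_integral_mult_left has_bochner_integral_unit_uniform_indicator) auto
    have tail: "has_bochner_integral unit_uniform
        (\<lambda>u. indicator {a + f_prob f..} u * \<phi> (pick_fork fs (u - (a + f_prob f))))
        (\<Sum>f\<leftarrow>fs. f_prob f * \<phi> f)"
      using Cons.prems pf Cons by (intro Cons.IH) auto
    have "indicator {a..} u * \<phi> (pick_fork (f # fs) (u - a)) =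
        indicator {a..<a + f_prob f} u * \<phi> f
        + indicator {a + f_prob f..} u * \<phi> (pick_fork fs (u - (a + f_prob f)))" for u :: real
      using pf by (simp add: Cons indicator_def diff_diff_eq)
    then show ?thesis
      using has_bochner_integral_add[OF head tail] by simp
  qed
qed simp

lemma has_bochner_integral_pick_fork:
  fixes \<phi> :: "('l, 'p::finite, 'r::finite) fork \<Rightarrow> real"
  assumes fs: "fs \<noteq> []" "\<forall>f\<in>set fs. 0 < f_prob f" "(\<Sum>f\<leftarrow>fs. f_prob f) = 1"
  shows "has_bochner_integral unit_uniform (\<lambda>u. \<phi> (pick_fork fs u)) (\<Sum>f\<leftarrow>fs. f_prob f * \<phi> f)"
proof -
  have pick: "pick_fork fs \<in> unit_uniform \<rightarrow>\<^sub>M count_space (set fs)"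
    using measurable_pick_fork[OF fs(1) order_refl] by (simp add: measurable_cong_sets)
  have meas: "(\<lambda>u. \<phi> (pick_fork fs u)) \<in> borel_measurable unit_uniform"
    by (rule measurable_compose_countable'[where f="\<lambda>f u. \<phi> f", OF _ pick]) (auto intro: countable_finite)
  then have meas_shifted: "(\<lambda>u. indicator {0..} u * \<phi> (pick_fork fs (u - 0))) \<in> borel_measurable unit_uniform"
    by simp
  have "AE u in unit_uniform. indicator {0..} u * \<phi> (pick_fork fs (u - 0)) = \<phi> (pick_fork fs u)"
    by (intro AE_uniform_measureI AE_I2) (auto simp: indicator_def)
  moreover have "has_bochner_integral unit_uniform (\<lambda>u. indicator {0..} u * \<phi> (pick_fork fs (u - 0)))
      (\<Sum>f\<leftarrow>fs. f_prob f * \<phi> f)"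
    using fs by (intro has_bochner_integral_pick_fork_shifted) auto
  ultimately show ?thesis
    using has_bochner_integral_cong_AE[OF meas_shifted meas] by blast
qed

lemma score_at_end_fork_weight_bound:
  assumes "score_at_end P"
  obtains K where "1 \<le> K"
    and "\<And>\<tau> f v r. \<tau> \<in> w_T P \<Longrightarrow> f \<in> set (t_forks \<tau>) \<Longrightarrow> f_wt f v r \<le> K"
    and "\<And>\<tau> f v r. \<tau> \<in> w_T P \<Longrightarrow> f \<in> set (t_forks \<tau>) \<Longrightarrow> f_dest f \<noteq> w_out P \<Longrightarrow> f_wt f v r = 1"
proof -
  obtain \<tau>\<^sub>e where exit: "\<tau>\<^sub>e \<in> w_T P" "\<exists>f\<in>set (t_forks \<tau>\<^sub>e). f_dest f = w_out P"
    and exit_unique: "\<And>\<tau>. \<tau> \<in> w_T P \<Longrightarrow> \<exists>f\<in>set (t_forks \<tau>). f_dest f = w_out P \<Longrightarrow> \<tau> = \<tau>\<^sub>e"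
    using assms unfolding score_at_end_def by metis
  then obtain f\<^sub>e M where f\<^sub>e: "t_forks \<tau>\<^sub>e = [f\<^sub>e]" "\<And>v r. f_wt f\<^sub>e v r \<le> M"
    using assms unfolding score_at_end_def by metis
  have nonexit: "f_wt f v r = 1" if "\<tau> \<in> w_T P" "f \<in> set (t_forks \<tau>)" "f_dest f \<noteq> w_out P" for \<tau> f v r
    using assms that unfolding score_at_end_def by metis
  show ?thesis
  proof (rule that[of "max 1 M"])
    fix \<tau> f v r assume \<tau>: "\<tau> \<in> w_T P" and f: "f \<in> set (t_forks \<tau>)"
    show "f_wt f v r \<le> max 1 M"
    proof (cases "f_dest f = w_out P")
      case True
      then have "\<tau> = \<tau>\<^sub>e"
        using exit_unique[OF \<tau>] f by blast
      then have "f = f\<^sub>e"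
        using f f\<^sub>e(1) by simp
      then show ?thesis
        using f\<^sub>e(2)[of v r] by simp
    qed (simp add: nonexit[OF \<tau> f])
  qed (auto intro: nonexit)
qed

type_synonym ('l, 'p) weighted_state = "'l \<times> (real^'p) \<times> real"

locale bounded_weight_wpts =
  fixes P :: "('l::finite, 'p::finite, 'r::finite) wpts" and K :: real
  assumes wpts: "is_wpts P"
    and one_le_K: "1 \<le> K"
    and fork_weight_le: "\<tau> \<in> w_T P \<Longrightarrow> f \<in> set (t_forks \<tau>) \<Longrightarrow> f_wt f v r \<le> K"
    and fork_weight_nonexit:
      "\<tau> \<in> w_T P \<Longrightarrow> f \<in> set (t_forks \<tau>) \<Longrightarrow> f_dest f \<noteq> w_out P \<Longrightarrow> f_wt f v r = 1"
begin

lemma finite_transitions: "finite (w_T P)"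
  using wpts by (simp add: is_wpts_def)

lemma prob_space_samples: "prob_space (w_D P)"
  using wpts by (simp add: is_wpts_def)

lemma sets_samples [measurable_cong]: "sets (w_D P) = sets borel"
  using wpts by (simp add: is_wpts_def)

lemma transitionD:
  assumes "\<tau> \<in> w_T P"
  shows "t_forks \<tau> \<noteq> []" "{v. t_guard \<tau> v} \<in> sets borel" "(\<Sum>f\<leftarrow>t_forks \<tau>. f_prob f) = 1"
    and "f \<in> set (t_forks \<tau>) \<Longrightarrow> 0 < f_prob f"
    and "f \<in> set (t_forks \<tau>) \<Longrightarrow> 0 \<le> f_wt f v r"
    and "f \<in> set (t_forks \<tau>) \<Longrightarrow> case_prod (f_upd f) \<in> borel \<Otimes>\<^sub>M borel \<rightarrow>\<^sub>M borel"
    and "f \<in> set (t_forks \<tau>) \<Longrightarrow> case_prod (f_wt f) \<in> borel_measurable (borel \<Otimes>\<^sub>M borel)"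
  using wpts assms unfolding is_wpts_def by blast+

lemma ex1_enabled: "l \<noteq> w_out P \<Longrightarrow> \<exists>!\<tau>. \<tau> \<in> w_T P \<and> t_src \<tau> = l \<and> t_guard \<tau> v"
  using wpts unfolding is_wpts_def by blast

lemma enabled_in_transitions: "l \<noteq> w_out P \<Longrightarrow> enabled P l v \<in> w_T P"
  using theI'[OF ex1_enabled] unfolding enabled_def by blast

lemma enabled_eq_iff:
  assumes "l \<noteq> w_out P" "\<tau> \<in> w_T P"
  shows "enabled P l v = \<tau> \<longleftrightarrow> t_src \<tau> = l \<and> t_guard \<tau> v"
  using theI'[OF ex1_enabled[OF assms(1)]] ex1_enabled[OF assms(1)] assms(2)
  unfolding enabled_def by blast

lemma measurable_enabled:
  assumes "l \<noteq> w_out P"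
  shows "enabled P l \<in> borel \<rightarrow>\<^sub>M count_space (w_T P)"
proof (subst measurable_count_space_eq2[OF finite_transitions], safe)
  fix v show "enabled P l v \<in> w_T P"
    using enabled_in_transitions[OF assms] .
next
  fix \<tau> assume \<tau>: "\<tau> \<in> w_T P"
  have "enabled P l -` {\<tau>} \<inter> space borel = (if t_src \<tau> = l then {v. t_guard \<tau> v} else {})"
    using enabled_eq_iff[OF assms \<tau>] by auto
  then show "enabled P l -` {\<tau>} \<inter> space borel \<in> sets borel"
    using transitionD(2)[OF \<tau>] by simp
qed

lemma pick_enabled_fork:
  assumes "l \<noteq> w_out P"
  shows "pick_fork (t_forks (enabled P l v)) u \<in> set (t_forks (enabled P l v))"
  using pick_fork_in_set transitionD(1) enabled_in_transitions[OF assms] by blast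

definition all_forks :: "('l, 'p, 'r) fork set" where
  "all_forks = (\<Union>\<tau>\<in>w_T P. set (t_forks \<tau>))"

lemma countable_all_forks: "countable all_forks"
  unfolding all_forks_def using finite_transitions by (auto intro: countable_finite)

text \<open>Before termination the weight is still the initial \<open>1\<close>: only the exit fork scores.\<close>

definition weight_inv :: "('l, 'p) weighted_state \<Rightarrow> bool" where
  "weight_inv = (\<lambda>(l, v, w). (l \<noteq> w_out P \<longrightarrow> w = 1) \<and> 0 \<le> w \<and> w \<le> K)"

lemma weight_inv_init: "weight_inv (w_init P, v, 1)"
  using one_le_K by (simp add: weight_inv_def)

lemma weight_inv_step:
  assumes "weight_inv s"
  shows "weight_inv (step P s x)"
proof -
  obtain l v w where s: "s = (l, v, w)" by (cases s)
  obtain u r where x: "x = (u, r)" by (cases x)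
  show ?thesis
  proof (cases "l = w_out P")
    case False
    let ?f = "pick_fork (t_forks (enabled P l v)) u"
    have "?f \<in> set (t_forks (enabled P l v))" "enabled P l v \<in> w_T P"
      using pick_enabled_fork enabled_in_transitions False by auto
    then show ?thesis
      using assms False fork_weight_le fork_weight_nonexit transitionD(5)
      by (simp add: s x step_def weight_inv_def Let_def)
  qed (use assms in \<open>simp add: s x step_def\<close>)
qed

lemma weight_inv_run: "weight_inv s \<Longrightarrow> weight_inv (run P s \<omega> n)"
  by (induction n) (auto intro: weight_inv_step)

lemma run_after_exit: "fst (run P s \<omega> m) = w_out P \<Longrightarrow> run P s \<omega> (m + n) = run P s \<omega> m"
  by (induction n) (auto simp: step_def split: prod.splits)

lemma run_shift: "run P s (case_nat x \<omega>) (Suc n) = run P (step P s x) \<omega> n"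
  by (induction n) auto

definition state_measure :: "('l, 'p) weighted_state measure" where
  "state_measure = count_space UNIV \<Otimes>\<^sub>M (borel \<Otimes>\<^sub>M borel)"

definition seed_measure :: "(real \<times> (real^'r)) measure" where
  "seed_measure = unit_uniform \<Otimes>\<^sub>M w_D P"

lemma seed_space_eq: "seed_space P = PiM UNIV (\<lambda>_. seed_measure)"
  unfolding seed_space_def seed_measure_def ..

lemma measurable_fire_enabled:
  assumes l: "l \<noteq> w_out P"
    and V: "V \<in> N \<rightarrow>\<^sub>M borel" and W: "W \<in> N \<rightarrow>\<^sub>M borel"
    and U: "U \<in> N \<rightarrow>\<^sub>M borel" and R: "R \<in> N \<rightarrow>\<^sub>M borel"
  shows "(\<lambda>x. let f = pick_fork (t_forks (enabled P l (V x))) (U x) in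
           (f_dest f, f_upd f (V x) (R x), W x * f_wt f (V x) (R x))) \<in> N \<rightarrow>\<^sub>M state_measure"
proof -
  have pick: "(\<lambda>x. pick_fork (t_forks (enabled P l (V x))) (U x)) \<in> N \<rightarrow>\<^sub>M count_space all_forks"
  proof (rule measurable_compose_countable'[where g="\<lambda>x. enabled P l (V x)"])
    fix \<tau> assume "\<tau> \<in> w_T P"
    then show "(\<lambda>x. pick_fork (t_forks \<tau>) (U x)) \<in> N \<rightarrow>\<^sub>M count_space all_forks"
      by (intro measurable_compose[OF U measurable_pick_fork] transitionD(1)) (auto simp: all_forks_def)
  qed (use measurable_compose[OF V measurable_enabled[OF l]] finite_transitions in \<open>auto intro: countable_finite\<close>)
  have "(\<lambda>x. (f_dest f, f_upd f (V x) (R x), W x * f_wt f (V x) (R x))) \<in> N \<rightarrow>\<^sub>M state_measure"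
    if f: "f \<in> all_forks" for f
  proof -
    obtain \<tau> where \<tau>: "\<tau> \<in> w_T P" "f \<in> set (t_forks \<tau>)"
      using f unfolding all_forks_def by auto
    have "(\<lambda>x. f_upd f (V x) (R x)) \<in> N \<rightarrow>\<^sub>M borel"
      using measurable_compose[OF measurable_Pair[OF V R] transitionD(6)[OF \<tau>]] by simp
    moreover have "(\<lambda>x. f_wt f (V x) (R x)) \<in> N \<rightarrow>\<^sub>M borel"
      using measurable_compose[OF measurable_Pair[OF V R] transitionD(7)[OF \<tau>]] by simp
    ultimately show ?thesis
      unfolding state_measure_def using W by (intro measurable_Pair borel_measurable_times) auto
  qed
  then show ?thesis
    unfolding Let_def by (rule measurable_compose_countable'[OF _ pick countable_all_forks])
qed

lemma measurable_step: "(\<lambda>p. step P (fst p) (snd p)) \<in> state_measure \<Otimes>\<^sub>M seed_measure \<rightarrow>\<^sub>M state_measure"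
proof -
  have at_location: "(\<lambda>p. step P (l, snd (fst p)) (snd p)) \<in> state_measure \<Otimes>\<^sub>M seed_measure \<rightarrow>\<^sub>M state_measure"
    for l
  proof (cases "l = w_out P")
    case True
    then have exit: "(\<lambda>p. step P (l, snd (fst p)) (snd p)) = (\<lambda>p. (l, snd (fst p)))"
      by (auto simp: step_def split: prod.splits)
    show ?thesis
      unfolding exit state_measure_def by measurable
  next
    case False
    then have fire: "(\<lambda>p. step P (l, snd (fst p)) (snd p)) = (\<lambda>p.
      (let f = pick_fork (t_forks (enabled P l (fst (snd (fst p))))) (fst (snd p)) in
           (f_dest f, f_upd f (fst (snd (fst p))) (snd (snd p)),
            snd (snd (fst p)) * f_wt f (fst (snd (fst p))) (snd (snd p)))))"
      by (auto simp: step_def split: prod.splits)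
    show ?thesis
      unfolding fire
      by (rule measurable_fire_enabled[OF False]; unfold state_measure_def seed_measure_def; measurable)
  qed
  have "(\<lambda>p. fst (fst p)) \<in> state_measure \<Otimes>\<^sub>M seed_measure \<rightarrow>\<^sub>M count_space UNIV"
    unfolding state_measure_def by measurable
  from measurable_compose_countable[where f="\<lambda>l p. step P (l, snd (fst p)) (snd p)", OF at_location this]
  show ?thesis
    by simp
qed

lemma measurable_run: "(\<lambda>p. run P (fst p) (snd p) n) \<in> state_measure \<Otimes>\<^sub>M seed_space P \<rightarrow>\<^sub>M state_measure"
proof (induction n)
  case (Suc n)
  have "(\<lambda>p. snd p n) \<in> state_measure \<Otimes>\<^sub>M seed_space P \<rightarrow>\<^sub>M seed_measure"
    unfolding seed_space_eq by measurable
  from measurable_compose[OF measurable_Pair[OF Suc this] measurable_step]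
  show ?case by simp
qed simp

lemma measurable_run_from: "(\<lambda>\<omega>. run P s \<omega> n) \<in> seed_space P \<rightarrow>\<^sub>M state_measure"
  using measurable_compose[OF measurable_Pair[OF measurable_const measurable_ident] measurable_run]
  by (simp add: state_measure_def space_pair_measure)

lemma prob_space_seed_measure: "prob_space seed_measure"
  unfolding seed_measure_def by (rule prob_space_pair[OF prob_space_unit_uniform prob_space_samples])

lemma sequence_space_seed_measure: "sequence_space seed_measure"
  using prob_space_seed_measure
  by (auto simp: sequence_space_def product_prob_space_def product_prob_space_axioms_def
      product_sigma_finite_def prob_space_imp_sigma_finite)

lemma prob_space_seed_space: "prob_space (seed_space P)"
proof -
  interpret sequence_space seed_measure by (rule sequence_space_seed_measure)
  show ?thesis unfolding seed_space_eq by (rule P.prob_space_axioms)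
qed

lemma AE_terminates_from_init:
  assumes "AST P" "v \<in> supp_meas (w_mu P)"
  shows "AE \<omega> in seed_space P. terminates P (w_init P, v, 1) \<omega>"
proof -
  interpret prob_space "seed_space P" by (rule prob_space_seed_space)
  have "prob {\<omega> \<in> space (seed_space P). terminates P (w_init P, v, 1) \<omega>} = 1"
    using assms unfolding AST_def by (simp add: measure_def)
  from AE_prob_1[OF this] show ?thesis
    by simp
qed

lemma AE_step_reachable:
  assumes "(l, v) \<in> reachable P" "l \<noteq> w_out P"
  shows "AE x in seed_measure. (fst (step P (l, v, w) x), fst (snd (step P (l, v, w) x))) \<in> reachable P"
proof -
  interpret pair_sigma_finite unit_uniform "w_D P"
    using prob_space_unit_uniform prob_space_samples
    by (auto simp: pair_sigma_finite_def prob_space_imp_sigma_finite)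
  have "supp_meas (w_D P) \<in> sets borel"
    using closed_supp_meas by (rule borel_closed)
  then have "{x \<in> space seed_measure. snd x \<in> supp_meas (w_D P)} \<in> sets seed_measure"
    unfolding seed_measure_def by measurable
  moreover have "AE u in unit_uniform. AE r in w_D P. snd (u, r) \<in> supp_meas (w_D P)"
    using AE_in_supp_meas[OF sets_samples] by simp
  ultimately have "AE x in seed_measure. snd x \<in> supp_meas (w_D P)"
    unfolding seed_measure_def by (rule AE_pair_measure)
  then show ?thesis
  proof eventually_elim
    case (elim x)
    then show ?case
      using reachable.step[OF assms pick_enabled_fork[OF assms(2)]] assms(2)
      by (cases x) (simp add: step_def Let_def)
  qed
qed

end

locale wpts_potential = bounded_weight_wpts P K
  for P :: "('l::finite, 'p::finite, 'r::finite) wpts" and K +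
  fixes h :: "'l \<Rightarrow> real^'p \<Rightarrow> real" and B :: real
  assumes h_bounded: "\<bar>h l v\<bar> \<le> B"
    and h_measurable: "h l \<in> borel_measurable borel"
begin

definition weighted_potential :: "('l, 'p) weighted_state \<Rightarrow> real" where
  "weighted_potential = (\<lambda>(l, v, w). w * h l v)"

text \<open>At the exit location the potential is replaced by \<open>1\<close>, so that on a terminated run
  \<open>stopped_potential\<close> is the final weight.\<close>

definition stopped_potential :: "('l, 'p) weighted_state \<Rightarrow> real" where
  "stopped_potential s = (if fst s = w_out P then snd (snd s) else weighted_potential s)"

definition expected_potential :: "nat \<Rightarrow> ('l, 'p) weighted_state \<Rightarrow> real" where
  "expected_potential n s = (\<integral>\<omega>. stopped_potential (run P s \<omega> n) \<partial>seed_space P)"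

lemma measurable_weighted_potential: "weighted_potential \<in> borel_measurable state_measure"
proof -
  have "(\<lambda>s. snd (snd s) * h l (fst (snd s))) \<in> borel_measurable state_measure" for l
    using h_measurable[of l] unfolding state_measure_def by measurable
  from measurable_compose_countable[where f="\<lambda>l s. snd (snd s) * h l (fst (snd s))", OF this]
  show ?thesis
    by (simp add: weighted_potential_def case_prod_beta' state_measure_def)
qed

lemma measurable_stopped_potential: "stopped_potential \<in> borel_measurable state_measure"
  unfolding stopped_potential_def
  using measurable_weighted_potential unfolding state_measure_def by measurable

lemma abs_weighted_potential_le:
  assumes "weight_inv s"
  shows "\<bar>weighted_potential s\<bar> \<le> K * B"
proof -
  obtain l v w where s: "s = (l, v, w)" by (cases s)
  then have "0 \<le> w" "w \<le> K"
    using assms by (auto simp: weight_inv_def)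
  then have "w * \<bar>h l v\<bar> \<le> K * B"
    using h_bounded[of l v] by (intro mult_mono) auto
  then show ?thesis
    using \<open>0 \<le> w\<close> by (simp add: s weighted_potential_def abs_mult)
qed

lemma abs_stopped_potential_le:
  assumes "weight_inv s"
  shows "\<bar>stopped_potential s\<bar> \<le> K * max 1 B"
proof -
  have "K * B \<le> K * max 1 B" "K * 1 \<le> K * max 1 B"
    using one_le_K by (intro mult_left_mono; simp)+
  moreover have "\<bar>snd (snd s)\<bar> \<le> K"
    using assms by (auto simp: weight_inv_def)
  ultimately show ?thesis
    using abs_weighted_potential_le[OF assms] by (auto simp: stopped_potential_def)
qed

lemma expected_potential_0: "expected_potential 0 s = stopped_potential s"
proof -
  interpret prob_space "seed_space P" by (rule prob_space_seed_space)
  show ?thesis by (simp add: expected_potential_def prob_space)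
qed

lemma expected_potential_exit: "expected_potential n (w_out P, v, w) = w"
proof -
  interpret prob_space "seed_space P" by (rule prob_space_seed_space)
  show ?thesis
    using run_after_exit[where m=0] by (simp add: expected_potential_def stopped_potential_def prob_space)
qed

lemma measurable_step_from: "(\<lambda>x. step P s x) \<in> seed_measure \<rightarrow>\<^sub>M state_measure"
  using measurable_compose[OF measurable_Pair[OF measurable_const measurable_ident] measurable_step]
  by (simp add: state_measure_def space_pair_measure)

text \<open>The Markov property: the seed sequence splits into its first seed and an independent
  copy of the whole seed sequence.\<close>

lemma expected_potential_Suc:
  assumes "weight_inv s"
  shows "integrable seed_measure (\<lambda>x. expected_potential n (step P s x))"
    and "expected_potential (Suc n) s = (\<integral>x. expected_potential n (step P s x) \<partial>seed_measure)"
proof -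
  interpret S: sequence_space seed_measure by (rule sequence_space_seed_measure)
  interpret prob_space "seed_measure \<Otimes>\<^sub>M seed_space P"
    using prob_space_pair[OF prob_space_seed_measure prob_space_seed_space] .
  interpret pair_sigma_finite seed_measure "seed_space P"
    using prob_space_seed_measure prob_space_seed_space
    by (auto simp: pair_sigma_finite_def prob_space_imp_sigma_finite)
  let ?g = "\<lambda>p. stopped_potential (run P (step P s (fst p)) (snd p) n)"
  have "(\<lambda>p. (step P s (fst p), snd p)) \<in> seed_measure \<Otimes>\<^sub>M seed_space P \<rightarrow>\<^sub>M state_measure \<Otimes>\<^sub>M seed_space P"
    using measurable_step_from by measurable
  from measurable_compose[OF this measurable_compose[OF measurable_run measurable_stopped_potential]]
  have "?g \<in> borel_measurable (seed_measure \<Otimes>\<^sub>M seed_space P)"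
    by simp
  then have int: "integrable (seed_measure \<Otimes>\<^sub>M seed_space P) ?g"
    by (rule integrable_const_bound[where B="K * max 1 B", rotated])
      (auto intro!: abs_stopped_potential_le weight_inv_run weight_inv_step assms)
  then show "integrable seed_measure (\<lambda>x. expected_potential n (step P s x))"
    unfolding expected_potential_def using integrable_fst'[OF int] by simp
  have shift: "(\<lambda>(x, \<omega>). case_nat x \<omega>) \<in> seed_measure \<Otimes>\<^sub>M seed_space P \<rightarrow>\<^sub>M seed_space P"
    unfolding seed_space_eq by measurable
  have "expected_potential (Suc n) s
      = (\<integral>\<omega>. stopped_potential (run P s \<omega> (Suc n))
          \<partial>distr (seed_measure \<Otimes>\<^sub>M seed_space P) (seed_space P) (\<lambda>(x, \<omega>). case_nat x \<omega>))"
    unfolding expected_potential_def using S.PiM_iter by (simp add: seed_space_eq)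
  also have "\<dots> = (\<integral>p. stopped_potential (run P s (case_nat (fst p) (snd p)) (Suc n)) \<partial>(seed_measure \<Otimes>\<^sub>M seed_space P))"
    by (subst integral_distr[OF shift measurable_compose[OF measurable_run_from measurable_stopped_potential]])
      (simp add: split_beta')
  also have "\<dots> = (\<integral>x. expected_potential n (step P s x) \<partial>seed_measure)"
    unfolding run_shift expected_potential_def using integral_fst'[OF int] by simp
  finally show "expected_potential (Suc n) s = (\<integral>x. expected_potential n (step P s x) \<partial>seed_measure)" .
qed

lemma ewt_eq_integral_step:
  assumes l: "l \<noteq> w_out P"
  shows "integrable seed_measure (\<lambda>x. weighted_potential (step P (l, v, 1) x))"
    and "ewt P h l v = (\<integral>x. weighted_potential (step P (l, v, 1) x) \<partial>seed_measure)"
proof -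
  interpret prob_space seed_measure by (rule prob_space_seed_measure)
  interpret pair_sigma_finite unit_uniform "w_D P"
    using prob_space_unit_uniform prob_space_samples
    by (auto simp: pair_sigma_finite_def prob_space_imp_sigma_finite)
  let ?\<tau> = "enabled P l v"
  have \<tau>: "?\<tau> \<in> w_T P" using enabled_in_transitions[OF l] .
  have inv: "weight_inv (l, v, 1)"
    using one_le_K by (simp add: weight_inv_def)
  have step: "step P (l, v, 1) (u, r) =
      (let f = pick_fork (t_forks ?\<tau>) u in (f_dest f, f_upd f v r, f_wt f v r))" for u r
    using l by (simp add: step_def Let_def)
  show int: "integrable seed_measure (\<lambda>x. weighted_potential (step P (l, v, 1) x))"
    using measurable_compose[OF measurable_step_from measurable_weighted_potential]
    by (rule integrable_const_bound[where B="K * B", rotated])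
      (auto intro!: abs_weighted_potential_le weight_inv_step inv)
  have "(\<integral>x. weighted_potential (step P (l, v, 1) x) \<partial>seed_measure)
      = (\<integral>u. (\<lambda>f. \<integral>r. f_wt f v r * h (f_dest f) (f_upd f v r) \<partial>w_D P) (pick_fork (t_forks ?\<tau>) u) \<partial>unit_uniform)"
    using integral_fst'[OF int[unfolded seed_measure_def]]
    by (simp add: seed_measure_def step Let_def weighted_potential_def)
  also have "\<dots> = (\<Sum>f\<leftarrow>t_forks ?\<tau>. f_prob f * (\<integral>r. f_wt f v r * h (f_dest f) (f_upd f v r) \<partial>w_D P))"
    by (rule has_bochner_integral_integral_eq[OF has_bochner_integral_pick_fork])
      (use transitionD[OF \<tau>] in auto)
  also have "\<dots> = ewt P h l v"
    using l by (simp add: ewt_def)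
  finally show "ewt P h l v = (\<integral>x. weighted_potential (step P (l, v, 1) x) \<partial>seed_measure)" ..
qed

text \<open>A PUWF is the case \<open>c = 1\<close>, a PLWF the case \<open>c = -1\<close>.\<close>

lemma expected_potential_comparison:
  fixes c :: real
  assumes step_cond: "\<And>l v. (l, v) \<in> reachable P \<Longrightarrow> l \<noteq> w_out P \<Longrightarrow> 0 \<le> c * (h l v - ewt P h l v)"
    and exit_cond: "\<And>v. (w_out P, v) \<in> reachable P \<Longrightarrow> h (w_out P) v = 1"
  shows "(l, v) \<in> reachable P \<Longrightarrow> weight_inv (l, v, w) \<Longrightarrow>
    0 \<le> c * (weighted_potential (l, v, w) - expected_potential n (l, v, w))"
proof (induction n arbitrary: l v w)
  case 0
  then show ?case
    using exit_cond
    by (cases "l = w_out P") (simp_all add: expected_potential_0 stopped_potential_def weighted_potential_def)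
next
  case (Suc n)
  show ?case
  proof (cases "l = w_out P")
    case True
    then show ?thesis
      using Suc.prems exit_cond by (simp add: expected_potential_exit weighted_potential_def)
  next
    case False
    then have w: "w = 1"
      using Suc.prems(2) by (simp add: weight_inv_def)
    let ?s = "\<lambda>x. step P (l, v, 1) x"
    let ?D = "\<lambda>x. c * (weighted_potential (?s x) - expected_potential n (?s x))"
    have "AE x in seed_measure. 0 \<le> ?D x"
      using AE_step_reachable[OF Suc.prems(1) False, where w=1]
    proof eventually_elim
      case (elim x)
      obtain l' v' w' where s: "?s x = (l', v', w')" by (cases "?s x")
      have "weight_inv (?s x)"
        using Suc.prems(2) w by (intro weight_inv_step) simp
      then show ?case
        using Suc.IH[of l' v' w'] elim by (simp add: s)
    qed
    then have "0 \<le> (\<integral>x. ?D x \<partial>seed_measure)"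
      by (rule integral_nonneg_AE)
    also have "\<dots> = c * (ewt P h l v - expected_potential (Suc n) (l, v, 1))"
      using expected_potential_Suc[of "(l, v, 1)" n] ewt_eq_integral_step[OF False, of v] Suc.prems(2) w
      by (simp add: integral_diff)
    finally show ?thesis
      using step_cond[OF Suc.prems(1) False] w by (simp add: weighted_potential_def algebra_simps)
  qed
qed

lemma stopped_potential_run_tendsto:
  assumes "terminates P s \<omega>"
  shows "(\<lambda>n. stopped_potential (run P s \<omega> n)) \<longlonglongrightarrow> snd (snd (run P s \<omega> (term_time P s \<omega>)))"
proof -
  let ?T = "term_time P s \<omega>"
  have exit: "fst (run P s \<omega> ?T) = w_out P"
    using assms unfolding terminates_def term_time_def by (rule LeastI_ex)
  have "stopped_potential (run P s \<omega> (?T + k)) = snd (snd (run P s \<omega> ?T))" for k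
    using run_after_exit[OF exit] exit by (simp add: stopped_potential_def)
  then have "\<forall>\<^sub>F n in sequentially. stopped_potential (run P s \<omega> n) = snd (snd (run P s \<omega> ?T))"
    by (auto simp: eventually_sequentially dest!: le_Suc_ex)
  then show ?thesis
    by (rule tendsto_eventually)
qed

lemma expected_potential_tendsto_expected_weight:
  assumes "AST P" "v \<in> supp_meas (w_mu P)"
  shows "(\<lambda>n. ereal (expected_potential n (w_init P, v, 1))) \<longlonglongrightarrow> enn2ereal (expected_weight P v UNIV)"
proof -
  interpret prob_space "seed_space P" by (rule prob_space_seed_space)
  define s where "s = (w_init P, v, 1::real)"
  define Y where "Y n \<omega> = stopped_potential (run P s \<omega> n)" for n \<omega>
  define Y_lim where "Y_lim \<omega> = lim (\<lambda>n. Y n \<omega>)" for \<omega>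
  have AE_terminates: "AE \<omega> in seed_space P. terminates P s \<omega>"
    using AE_terminates_from_init[OF assms] unfolding s_def .
  have Y_meas: "Y n \<in> borel_measurable (seed_space P)" for n
    unfolding Y_def by (rule measurable_compose[OF measurable_run_from measurable_stopped_potential])
  then have Y_lim_meas: "Y_lim \<in> borel_measurable (seed_space P)"
    unfolding Y_lim_def by measurable
  have Y_lim: "(\<lambda>n. Y n \<omega>) \<longlonglongrightarrow> Y_lim \<omega>" "Y_lim \<omega> = snd (snd (run P s \<omega> (term_time P s \<omega>)))"
    if "terminates P s \<omega>" for \<omega>
  proof -
    have "(\<lambda>n. Y n \<omega>) \<longlonglongrightarrow> snd (snd (run P s \<omega> (term_time P s \<omega>)))"
      unfolding Y_def by (rule stopped_potential_run_tendsto[OF that])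
    moreover from this have "Y_lim \<omega> = snd (snd (run P s \<omega> (term_time P s \<omega>)))"
      unfolding Y_lim_def by (rule limI)
    ultimately show "(\<lambda>n. Y n \<omega>) \<longlonglongrightarrow> Y_lim \<omega>" "Y_lim \<omega> = snd (snd (run P s \<omega> (term_time P s \<omega>)))"
      by simp_all
  qed
  have Y_tendsto: "AE \<omega> in seed_space P. (\<lambda>n. Y n \<omega>) \<longlonglongrightarrow> Y_lim \<omega>"
    using AE_terminates by eventually_elim (rule Y_lim(1))
  have Y_bounded: "AE \<omega> in seed_space P. norm (Y n \<omega>) \<le> K * max 1 B" for n
    unfolding Y_def s_def by (auto intro!: abs_stopped_potential_le weight_inv_run weight_inv_init)
  have "AE \<omega> in seed_space P. 0 \<le> Y_lim \<omega>"
    using AE_terminates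
  proof eventually_elim
    case (elim \<omega>)
    have "weight_inv (run P s \<omega> (term_time P s \<omega>))"
      using weight_inv_run weight_inv_init unfolding s_def by blast
    then show ?case
      using Y_lim(2)[OF elim] by (simp add: weight_inv_def split: prod.splits)
  qed
  moreover have "integrable (seed_space P) Y_lim"
    using integrable_dominated_convergence[OF Y_lim_meas Y_meas _ Y_tendsto Y_bounded] by simp
  moreover have "(\<lambda>n. expected_potential n s) \<longlonglongrightarrow> (\<integral>\<omega>. Y_lim \<omega> \<partial>seed_space P)"
    using integral_dominated_convergence[OF Y_lim_meas Y_meas _ Y_tendsto Y_bounded]
    unfolding expected_potential_def Y_def by simp
  moreover have "expected_weight P v UNIV = (\<integral>\<^sup>+\<omega>. ennreal (Y_lim \<omega>) \<partial>seed_space P)"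
    unfolding expected_weight_def s_def[symmetric] Let_def
    using AE_terminates by (intro nn_integral_cong_AE) (auto simp: Y_lim(2))
  ultimately show ?thesis
    unfolding s_def by (simp add: nn_integral_eq_integral integral_nonneg_AE)
qed

end

theorem theorem4p2:
  fixes P :: "('l::finite, 'p::finite, 'r::finite) wpts"
    and h :: "'l \<Rightarrow> real^'p \<Rightarrow> real"
  assumes "score_at_end P"
    and "\<exists>B. \<forall>l v. \<bar>h l v\<bar> \<le> B"
    and "\<forall>l. h l \<in> borel_measurable borel"
  shows "(PUWF P h \<longrightarrow> (\<forall>v\<in>supp_meas (w_mu P).
             enn2ereal (expected_weight P v UNIV) \<le> ereal (h (w_init P) v))) \<and>
         (PLWF P h \<longrightarrow> (\<forall>v\<in>supp_meas (w_mu P).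
             ereal (h (w_init P) v) \<le> enn2ereal (expected_weight P v UNIV)))"
proof -
  obtain K where K: "bounded_weight_wpts P K"
    using score_at_end_fork_weight_bound[OF assms(1)] assms(1)
    unfolding bounded_weight_wpts_def score_at_end_def by metis
  obtain B where "\<And>l v. \<bar>h l v\<bar> \<le> B"
    using assms(2) by blast
  with K assms(3) interpret wpts_potential P K h B
    by (simp add: wpts_potential_def wpts_potential_axioms_def)
  have AST: "AST P"
    using assms(1) by (simp add: score_at_end_def)
  have comparison: "0 \<le> c * (h (w_init P) v - expected_potential n (w_init P, v, 1))"
    if "v \<in> supp_meas (w_mu P)"
      and "\<forall>(l, v)\<in>reachable P. l \<noteq> w_out P \<longrightarrow> 0 \<le> c * (h l v - ewt P h l v)"
      and "\<forall>(l, v)\<in>reachable P. l = w_out P \<longrightarrow> h l v = 1"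
    for v c n
    using expected_potential_comparison[of c "w_init P" v 1 n] that reachable.init weight_inv_init
    by (auto simp: weighted_potential_def)
  note tendsto = expected_potential_tendsto_expected_weight[OF AST]
  show ?thesis
  proof (intro conjI impI ballI)
    fix v assume "PUWF P h" "v \<in> supp_meas (w_mu P)"
    with tendsto[of v] comparison[of v 1] show "enn2ereal (expected_weight P v UNIV) \<le> ereal (h (w_init P) v)"
      by (intro LIMSEQ_le_const2) (auto simp: PUWF_def)
  next
    fix v assume "PLWF P h" "v \<in> supp_meas (w_mu P)"
    with tendsto[of v] comparison[of v "-1"] show "ereal (h (w_init P) v) \<le> enn2ereal (expected_weight P v UNIV)"
      by (intro LIMSEQ_le_const) (auto simp: PLWF_def)
  qed
qed

end
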